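(* Let $V$ be a finite-dimensional real vector space, $\phi\in\mathrm{End}(V)\setminus\{0\}$, $W=\mathrm{im}(\phi)$, $\alpha\in V^*$ and $c\in C_{sl}(W)$. Then the Lie quasi-state $\zeta_{\alpha,c}$ on $\mathfrak{g}_\phi$ is invariant under the adjoint group of $\mathfrak{g}_\phi$ if and only if (i) $\mathrm{im}\,\phi\subset\ker\alpha$, and (ii) $c$ is constant on cosets of $\mathrm{im}\,\phi^2$ in $W$, i.e. $c(w+u)=c(w)$ for all $w\in W$, $u\in\mathrm{im}\,\phi^2$ (so $c$ descends to a function on $W/\mathrm{im}\,\phi^2$).
   Context: $\mathfrak{g}_\phi$ is $V\times\mathbb{R}$ with bracket $[(v,s),(w,t)]=(s\phi(w)-t\phi(v),0)$. $C_{sl}(W)$ is the space of continuous functions $c:W\to\mathbb{R}$ with $c(w)/\|w\|\to0$ as $w\to\infty$. $\zeta_{\alpha,c}:\mathfrak{g}_\phi\to\mathbb{R}$ is defined by $\zeta_{\alpha,c}(v,t)=c(\phi(v)/t)\,t+\alpha(v)$ for $t\ne0$ and $\zeta_{\alpha,c}(v,0)=\alpha(v)$; it is a continuous Lie quasi-state (a function linear on every abelian subalgebra). Ad-invariance means $\zeta(\exp(\mathrm{ad}(Y))X)=\zeta(X)$ for all $X,Y\in\mathfrak{g}_\phi$. *)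

theory Defs
  imports "HOL-Analysis.Analysis"
begin

text \<open>The Lie algebra g_phi is modelled on V \<times> real, V a finite-dimensional
  real vector space (type class euclidean_space).\<close>

definition gbracket :: "('v::euclidean_space \<Rightarrow> 'v) \<Rightarrow> 'v \<times> real \<Rightarrow> 'v \<times> real \<Rightarrow> 'v \<times> real" where
  "gbracket \<phi> X Y = (snd X *\<^sub>R \<phi> (fst Y) - snd Y *\<^sub>R \<phi> (fst X), 0)"

definition gad :: "('v::euclidean_space \<Rightarrow> 'v) \<Rightarrow> 'v \<times> real \<Rightarrow> ('v \<times> real \<Rightarrow> 'v \<times> real)" where
  "gad \<phi> Y = gbracket \<phi> Y"

definition exp_ad :: "('v::euclidean_space \<Rightarrow> 'v) \<Rightarrow> 'v \<times> real \<Rightarrow> 'v \<times> real \<Rightarrow> 'v \<times> real" where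
  "exp_ad \<phi> Y X = (\<Sum>n. (1 / fact n) *\<^sub>R ((gad \<phi> Y ^^ n) X))"

definition C_sl :: "'v::euclidean_space set \<Rightarrow> ('v \<Rightarrow> real) set" where
  "C_sl W = {c. continuous_on W c \<and>
      filterlim (\<lambda>w. c w / norm w) (nhds 0) (inf at_infinity (principal W))}"

definition zeta :: "('v::euclidean_space \<Rightarrow> 'v) \<Rightarrow> ('v \<Rightarrow> real) \<Rightarrow> ('v \<Rightarrow> real) \<Rightarrow> 'v \<times> real \<Rightarrow> real" where
  "zeta \<phi> \<alpha> c X = (if snd X \<noteq> 0 then c ((1 / snd X) *\<^sub>R \<phi> (fst X)) * snd X + \<alpha> (fst X)
                     else \<alpha> (fst X))"

definition ad_invariant :: "('v::euclidean_space \<Rightarrow> 'v) \<Rightarrow> ('v \<times> real \<Rightarrow> real) \<Rightarrow> bool" where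
  "ad_invariant \<phi> \<zeta> \<longleftrightarrow> (\<forall>X Y. \<zeta> (exp_ad \<phi> Y X) = \<zeta> X)"

end

theory Submission
  imports Defs
begin

text \<open>
  Every operator ad Y of g_phi takes values in the abelian ideal
  im(phi) \<times> 0, and this ideal is closed; hence exp(ad Y) X = X + (phi r, 0)
  for some r, i.e. the adjoint group only translates the V-component by
  elements of im(phi), keeping the R-component t.  Since zeta(v,t) depends on
  v only through alpha(v) and phi(v)/t, conditions (i) and (ii) make zeta
  blind to such translations, which gives sufficiency.

  For necessity we use the explicit unipotent elements Y = (w,0), for which
  exp(ad Y)(v,1) = (v - phi w, 1).  Invariance then yields the drift identity
  c(x - phi(phi w)) = c(x) + alpha(phi w) for x in im(phi).  Iterating it,
  c grows linearly along the ray -n phi(phi w) unless alpha(phi w) = 0; the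
  sublinear growth of c forbids this, giving (i), and then the drift
  identity itself becomes (ii).
\<close>

lemma exp_series_summable:
  fixes f :: "'a::banach \<Rightarrow> 'a"
  assumes "bounded_linear f"
  shows "summable (\<lambda>n. (1 / fact n) *\<^sub>R ((f ^^ n) x))"
proof -
  obtain K where K: "K > 0" "\<And>y. norm (f y) \<le> norm y * K"
    using bounded_linear.pos_bounded[OF assms] by blast
  have power_bound: "norm ((f ^^ n) x) \<le> norm x * K ^ n" for n
  proof (induction n)
    case (Suc n)
    have "norm ((f ^^ Suc n) x) \<le> norm ((f ^^ n) x) * K" using K(2) by simp
    also have "\<dots> \<le> norm x * K ^ n * K" using Suc K(1) by (simp add: mult_right_mono)
    finally show ?case by (simp add: algebra_simps)
  qed simp
  have majorant: "summable (\<lambda>n. norm x * (inverse (fact n) * K ^ n))"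
    by (intro summable_mult summable_exp)
  have term_bound: "norm ((1 / fact n) *\<^sub>R ((f ^^ n) x)) \<le> norm x * (inverse (fact n) * K ^ n)" for n
    using mult_left_mono[OF power_bound[of n], of "1 / fact n"] by (simp add: field_simps)
  show ?thesis
    by (rule summable_comparison_test'[OF majorant]) (rule term_bound)
qed

text \<open>If f takes values in a closed subspace S, then exp(f) x differs from x by an
  element of S: all terms of the series beyond the zeroth lie in S.\<close>
lemma exp_series_minus_in_subspace:
  fixes f :: "'a::banach \<Rightarrow> 'a"
  assumes "bounded_linear f" and "subspace S" and "closed S" and "\<And>y. f y \<in> S"
  shows "(\<Sum>n. (1 / fact n) *\<^sub>R ((f ^^ n) x)) - x \<in> S"
proof -
  define a where "a = (\<lambda>n. (1 / fact n) *\<^sub>R ((f ^^ n) x))"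
  have summable: "summable a" unfolding a_def by (rule exp_series_summable[OF assms(1)])
  have tail_in_S: "a (Suc n) \<in> S" for n
  proof -
    have "(f ^^ Suc n) x \<in> S" using assms(4) by simp
    then show ?thesis unfolding a_def by (rule subspace_scale[OF assms(2)])
  qed
  have partial_sums: "(\<lambda>n. \<Sum>i<n. a (Suc i)) \<longlonglongrightarrow> (\<Sum>n. a (Suc n))"
    using summable by (intro summable_LIMSEQ) (simp add: summable_Suc_iff)
  have "(\<Sum>i<n. a (Suc i)) \<in> S" for n
    by (rule subspace_sum[OF assms(2) tail_in_S])
  then have "(\<Sum>n. a (Suc n)) \<in> S"
    by (rule closed_sequentially[OF assms(3) _ partial_sums])
  moreover have "suminf a = a 0 + (\<Sum>n. a (Suc n))"
    using suminf_split_head[OF summable] by simp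
  ultimately show ?thesis by (simp add: a_def)
qed

lemma gad_eq:
  assumes "linear \<phi>"
  shows "gad \<phi> Y p = (\<phi> (snd Y *\<^sub>R fst p - snd p *\<^sub>R fst Y), 0)"
  unfolding gad_def gbracket_def
  by (simp add: linear_diff[OF assms] linear_scale[OF assms])

lemma gad_bounded_linear:
  assumes "linear \<phi>"
  shows "bounded_linear (gad \<phi> Y)"
proof -
  have "linear (gad \<phi> Y)"
    unfolding gad_def gbracket_def
    by (rule linearI) (auto simp: linear_add[OF assms] linear_scale[OF assms] algebra_simps)
  then show ?thesis by (simp add: linear_conv_bounded_linear)
qed

lemma exp_ad_translates:
  assumes "linear \<phi>"
  obtains r where "exp_ad \<phi> Y (v, t) = (v + \<phi> r, t)"
proof -
  define S where "S = range (\<lambda>x. (\<phi> x, 0::real))"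
  have lin_embed: "linear (\<lambda>x. (\<phi> x, 0::real))"
    by (rule linearI) (auto simp: linear_add[OF assms] linear_scale[OF assms])
  have "subspace S"
    unfolding S_def by (rule linear_subspace_image[OF lin_embed subspace_UNIV])
  moreover have "gad \<phi> Y p \<in> S" for p
    unfolding S_def by (simp add: gad_eq[OF assms])
  ultimately have "exp_ad \<phi> Y (v, t) - (v, t) \<in> S"
    unfolding exp_ad_def
    by (intro exp_series_minus_in_subspace gad_bounded_linear assms closed_subspace)
  then obtain r where "exp_ad \<phi> Y (v, t) - (v, t) = (\<phi> r, 0)"
    unfolding S_def by blast
  then have "exp_ad \<phi> Y (v, t) = (v, t) + (\<phi> r, 0)"
    by (simp add: diff_eq_eq)
  then show thesis by (intro that) simp
qed

text \<open>For Y = (w,0) the operator ad Y is nilpotent of order 2, so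
  exp(ad Y) = 1 + ad Y, which shears (v,t) to (v - t phi w, t).\<close>
lemma exp_ad_vertical:
  shows "exp_ad \<phi> (w, 0) (v, t) = (v - t *\<^sub>R \<phi> w, t)"
proof -
  define f where "f = gad \<phi> (w, 0)"
  have f_eq: "f p = (- snd p *\<^sub>R \<phi> w, 0)" for p
    by (simp add: f_def gad_def gbracket_def)
  have nilpotent: "(f ^^ Suc (Suc n)) (v, t) = 0" for n
    by (induction n) (simp_all add: f_eq zero_prod_def)
  have "(1 / fact n) *\<^sub>R ((f ^^ n) (v, t)) = 0" if "n \<notin> {0, 1}" for n
  proof -
    from that obtain m where "n = Suc (Suc m)"
      by (metis insertCI not0_implies_Suc One_nat_def)
    then show ?thesis using nilpotent by simp
  qed
  then have "(\<Sum>n. (1 / fact n) *\<^sub>R ((f ^^ n) (v, t)))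
      = (\<Sum>n\<in>{0, 1}. (1 / fact n) *\<^sub>R ((f ^^ n) (v, t)))"
    by (intro suminf_finite) auto
  also have "\<dots> = (v - t *\<^sub>R \<phi> w, t)" by (simp add: f_eq)
  finally show ?thesis unfolding exp_ad_def f_def .
qed

text \<open>If c has sublinear growth on a subspace W and translating by -u \<in> W
  always shifts c by the constant a, then a = 0: otherwise c would grow
  linearly along the ray -n u.\<close>
lemma sublinear_no_drift:
  fixes c :: "'v::euclidean_space \<Rightarrow> real"
  assumes "subspace W" and "u \<in> W" and "c \<in> C_sl W"
    and drift: "\<And>x. x \<in> W \<Longrightarrow> c (x - u) = c x + a"
  shows "a = 0"
proof (cases "u = 0")
  case True
  then show ?thesis using drift[OF subspace_0[OF assms(1)]] by simp
next
  case False
  define p where "p = (\<lambda>n::nat. (- real n) *\<^sub>R u)"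
  have p_in_W: "p n \<in> W" for n
    unfolding p_def by (rule subspace_scale[OF assms(1,2)])
  have c_along_ray: "c (p n) = c 0 + real n * a" for n
  proof (induction n)
    case (Suc n)
    have "p (Suc n) = p n - u" by (simp add: p_def algebra_simps)
    then have "c (p (Suc n)) = c (p n) + a" using drift[OF p_in_W[of n]] by simp
    then show ?case using Suc by (simp add: algebra_simps)
  qed (simp add: p_def)
  have nu: "norm u > 0" using False by simp
  have "filterlim (\<lambda>n. norm u * real n) at_top sequentially"
    by (rule filterlim_tendsto_pos_mult_at_top[OF tendsto_const nu filterlim_real_sequentially])
  then have "filterlim p at_infinity sequentially"
    by (intro filterlim_norm_at_top_imp_at_infinity) (simp add: p_def mult.commute)
  moreover have "filterlim p (principal W) sequentially"
    unfolding filterlim_principal using p_in_W by simp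
  ultimately have "filterlim p (inf at_infinity (principal W)) sequentially"
    by (simp add: filterlim_inf)
  moreover have "filterlim (\<lambda>x. c x / norm x) (nhds 0) (inf at_infinity (principal W))"
    using assms(3) unfolding C_sl_def by blast
  ultimately have ratio: "(\<lambda>n. c (p n) / norm (p n)) \<longlonglongrightarrow> 0"
    using filterlim_compose by blast
  have "(\<lambda>n. c (p n) / norm (p n) * norm u - c 0 / real n) \<longlonglongrightarrow> 0 * norm u - 0"
    by (intro tendsto_intros ratio)
  moreover have "eventually (\<lambda>n. c (p n) / norm (p n) * norm u - c 0 / real n = a) sequentially"
    using eventually_gt_at_top[of "0::nat"]
    by eventually_elim (use nu c_along_ray in \<open>simp add: p_def field_simps\<close>)
  ultimately have "(\<lambda>n. a) \<longlonglongrightarrow> 0" using tendsto_cong by fastforce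
  then show ?thesis by (simp add: LIMSEQ_const_iff)
qed

text \<open>Necessity, core step: invariance under exp(ad (w,0)) at (v,1) is the
  drift identity for c along im(phi^2), with drift alpha(phi w).\<close>
lemma invariant_drift:
  assumes "linear \<phi>" and "linear \<alpha>" and "ad_invariant \<phi> (zeta \<phi> \<alpha> c)"
  shows "c (\<phi> v - \<phi> (\<phi> w)) = c (\<phi> v) + \<alpha> (\<phi> w)"
proof -
  have "zeta \<phi> \<alpha> c (exp_ad \<phi> (w, 0) (v, 1)) = zeta \<phi> \<alpha> c (v, 1)"
    using assms(3) unfolding ad_invariant_def by blast
  then show ?thesis
    by (simp add: exp_ad_vertical zeta_def linear_diff[OF assms(1)] linear_diff[OF assms(2)])
qed

lemma zeta_translation_invariant:
  assumes "linear \<phi>" and "linear \<alpha>"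
    and alpha_vanishes: "\<forall>v. \<alpha> (\<phi> v) = 0"
    and c_periodic: "\<forall>w\<in>range \<phi>. \<forall>u\<in>range (\<phi> \<circ> \<phi>). c (w + u) = c w"
  shows "zeta \<phi> \<alpha> c (v + \<phi> r, t) = zeta \<phi> \<alpha> c (v, t)"
proof -
  have alpha_eq: "\<alpha> (v + \<phi> r) = \<alpha> v"
    using alpha_vanishes by (simp add: linear_add[OF assms(2)])
  have "c ((1 / t) *\<^sub>R \<phi> (v + \<phi> r))
      = c (\<phi> ((1 / t) *\<^sub>R v) + (\<phi> \<circ> \<phi>) ((1 / t) *\<^sub>R r))"
    by (simp add: linear_add[OF assms(1)] linear_scale[OF assms(1)] scaleR_add_right)
  also have "\<dots> = c (\<phi> ((1 / t) *\<^sub>R v))"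
    using c_periodic by blast
  also have "\<phi> ((1 / t) *\<^sub>R v) = (1 / t) *\<^sub>R \<phi> v"
    by (rule linear_scale[OF assms(1)])
  finally have "c ((1 / t) *\<^sub>R \<phi> (v + \<phi> r)) = c ((1 / t) *\<^sub>R \<phi> v)" .
  then show ?thesis using alpha_eq by (simp add: zeta_def)
qed

theorem mainTheorem11:
  fixes \<phi> :: "'v::euclidean_space \<Rightarrow> 'v" and \<alpha> :: "'v \<Rightarrow> real" and c :: "'v \<Rightarrow> real"
  assumes "linear \<phi>" and "\<phi> \<noteq> (\<lambda>v. 0)"
    and "linear \<alpha>"
    and "c \<in> C_sl (range \<phi>)"
  shows "ad_invariant \<phi> (zeta \<phi> \<alpha> c) \<longleftrightarrow>
           ((\<forall>v. \<alpha> (\<phi> v) = 0) \<and>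
            (\<forall>w\<in>range \<phi>. \<forall>u\<in>range (\<phi> \<circ> \<phi>). c (w + u) = c w))"
proof
  assume inv: "ad_invariant \<phi> (zeta \<phi> \<alpha> c)"
  note drift = invariant_drift[OF assms(1,3) inv]
  have W: "subspace (range \<phi>)" by (rule linear_subspace_image[OF assms(1) subspace_UNIV])
  have alpha_vanishes: "\<alpha> (\<phi> w) = 0" for w
    by (rule sublinear_no_drift[OF W _ assms(4)]) (auto intro: drift)
  moreover have "c (\<phi> v + \<phi> (\<phi> y)) = c (\<phi> v)" for v y
    using drift[of v "- y"] alpha_vanishes[of "- y"] by (simp add: linear_neg[OF assms(1)])
  ultimately show "(\<forall>v. \<alpha> (\<phi> v) = 0) \<and> (\<forall>w\<in>range \<phi>. \<forall>u\<in>range (\<phi> \<circ> \<phi>). c (w + u) = c w)"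
    by auto
next
  assume "(\<forall>v. \<alpha> (\<phi> v) = 0) \<and> (\<forall>w\<in>range \<phi>. \<forall>u\<in>range (\<phi> \<circ> \<phi>). c (w + u) = c w)"
  then show "ad_invariant \<phi> (zeta \<phi> \<alpha> c)"
    unfolding ad_invariant_def
    by (metis exp_ad_translates[OF assms(1)] zeta_translation_invariant[OF assms(1,3)] prod.exhaust)
qed

end
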